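(* Let $\mathbb{E}$ be a finite-dimensional real inner product space and let $f_i:\mathbb{E}\to(-\infty,\infty]$, $i=1,\ldots,M$, be convex, directionally differentiable, continuous on their domains, with $\mathrm{dom} f_i$ closed. Suppose $F(x):=\min_{i\in[M]}f_i(x)$ is continuous on $\mathrm{dom} F$. Then for every $x\in\mathrm{dom} F$ there exists a neighborhood $\mathcal{N}$ of $x$ such that for all $y\in\mathcal{N}\cap\mathrm{dom} F$ we have $y-x\in\mathcal{F}(x;\mathrm{dom} F)$ and $$F(y)\ge F(x)+F'(x;y-x).$$
   Context: $[M]=\{1,\ldots,M\}$; $\mathrm{dom}\, g=\{x\mid g(x)<\infty\}$. For $\mathcal{C}\subset\mathbb{E}$, $x\in\mathbb{E}$: $\mathcal{F}(x;\mathcal{C})=\{d\mid \exists\varsigma'>0:\ x+\varsigma d\in\mathcal{C}\ \forall\varsigma\in(0,\varsigma')\}$ if $x\in\mathcal{C}$, and $\emptyset$ otherwise. $g$ is directionally differentiable if for every $x\in\mathrm{dom}\, g$, $d\in\mathcal{F}(x;\mathrm{dom}\, g)$ the limit $g'(x;d)=\lim_{\varsigma\searrow0}(g(x+\varsigma d)-g(x))/\varsigma$ exists in $\mathbb{R}$. *)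

theory Defs
  imports "HOL-Analysis.Analysis" "HOL-Library.Extended_Real"
begin

text \<open>Extended-real-valued functions on a finite-dimensional real inner product space
  (type class euclidean_space). Values in (-inf, inf] are modelled as ereal values
  different from -inf.\<close>

definition edom :: "('a \<Rightarrow> ereal) \<Rightarrow> 'a set" where
  "edom g = {x. g x < \<infinity>}"

definition feasible_dirs :: "'a::real_vector \<Rightarrow> 'a set \<Rightarrow> 'a set" where
  "feasible_dirs x C = (if x \<in> C then {d. \<exists>s'>0. \<forall>s\<in>{0<..<s'}. x + s *\<^sub>R d \<in> C} else {})"

definition econvex :: "('a::real_vector \<Rightarrow> ereal) \<Rightarrow> bool" where
  "econvex g \<longleftrightarrow> (\<forall>x y. \<forall>t::real. 0 \<le> t \<and> t \<le> 1 \<longrightarrow>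
      g ((1 - t) *\<^sub>R x + t *\<^sub>R y) \<le> ereal (1 - t) * g x + ereal t * g y)"

definition has_dir_deriv :: "('a::real_vector \<Rightarrow> ereal) \<Rightarrow> 'a \<Rightarrow> 'a \<Rightarrow> real \<Rightarrow> bool" where
  "has_dir_deriv g x d L \<longleftrightarrow>
     ((\<lambda>s::real. (g (x + s *\<^sub>R d) - g x) / ereal s) \<longlongrightarrow> ereal L) (at_right 0)"

definition dir_differentiable :: "('a::real_vector \<Rightarrow> ereal) \<Rightarrow> bool" where
  "dir_differentiable g \<longleftrightarrow>
     (\<forall>x\<in>edom g. \<forall>d\<in>feasible_dirs x (edom g). \<exists>L. has_dir_deriv g x d L)"

end

theory Submission
  imports Defs
begin

(* Near x only the indices active at x (f i x = F x) can attain the minimum: an inactive index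
  stays strictly above F, by continuity of F and f i when f i x < \<infinity>, and because edom (f i) is
  closed when f i x = \<infinity>. Take N to be a ball with this property. For y \<in> N, an index j
  attaining F y is active at x, so f j is finite on the segment [x, y] by convexity; hence the
  segment lies in N \<inter> edom F, and near x along it F is the minimum of the active f i for which
  y - x is feasible. So F'(x; y - x) is the minimum of their directional derivatives, and the
  convexity inequality f j y \<ge> f j x + f j'(x; y - x) gives the claim. *)

definition lower_envelope :: "('i \<Rightarrow> 'a \<Rightarrow> 'b::linorder) \<Rightarrow> 'i set \<Rightarrow> 'a \<Rightarrow> 'b" where
  "lower_envelope f I z = Min ((\<lambda>i. f i z) ` I)"

lemma lower_envelope_le:
  "finite I \<Longrightarrow> i \<in> I \<Longrightarrow> lower_envelope f I z \<le> f i z"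
  by (simp add: lower_envelope_def)

lemma lower_envelope_attained:
  assumes "finite I" "I \<noteq> {}"
  obtains i where "i \<in> I" "lower_envelope f I z = f i z"
proof -
  have "lower_envelope f I z \<in> (\<lambda>i. f i z) ` I"
    unfolding lower_envelope_def using assms by (intro Min_in) auto
  then show ?thesis
    using that by blast
qed

lemma lower_envelope_eqI:
  assumes "finite I" "k \<in> I" "\<And>i. i \<in> I \<Longrightarrow> v \<le> f i z" "f k z = v"
  shows "lower_envelope f I z = v"
  unfolding lower_envelope_def using assms by (intro Min_eqI) auto

lemma tendsto_lower_envelope:
  fixes f :: "'i \<Rightarrow> 'b \<Rightarrow> 'c::linorder_topology"
  assumes "finite I" "I \<noteq> {}" "\<And>i. i \<in> I \<Longrightarrow> (f i \<longlongrightarrow> l i) F"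
  shows "(lower_envelope f I \<longlongrightarrow> Min (l ` I)) F"
  using assms unfolding lower_envelope_def
proof (induction I rule: finite_ne_induct)
  case (singleton i)
  then show ?case by simp
next
  case (insert i I)
  then have "((\<lambda>z. min (f i z) (Min ((\<lambda>i. f i z) ` I))) \<longlongrightarrow> min (l i) (Min (l ` I))) F"
    by (intro tendsto_min) auto
  with insert show ?case by simp
qed

lemma eventually_at_right_0_less_1: "\<forall>\<^sub>F s in at_right (0::real). s \<in> {0<..<1}"
  by (auto simp: eventually_at_right_field intro: exI[of _ 1])

lemma econvex_finite_segment:
  assumes "econvex g" "\<And>z. g z \<noteq> -\<infinity>" "g x < \<infinity>" "g y < \<infinity>" "0 \<le> t" "t \<le> 1"
  shows "g (x + t *\<^sub>R (y - x)) < \<infinity>"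
proof -
  have "g (x + t *\<^sub>R (y - x)) = g ((1 - t) *\<^sub>R x + t *\<^sub>R y)"
    by (simp add: algebra_simps)
  also have "\<dots> \<le> ereal (1 - t) * g x + ereal t * g y"
    using assms(1,5,6) unfolding econvex_def by blast
  also have "\<dots> < \<infinity>"
    using assms(2,3,4) by (cases "g x"; cases "g y") auto
  finally show ?thesis .
qed

lemma econvex_feasible_dir:
  assumes "econvex g" "\<And>z. g z \<noteq> -\<infinity>" "g x < \<infinity>" "g (x + s *\<^sub>R d) < \<infinity>" "s > 0"
  shows "d \<in> feasible_dirs x (edom g)"
proof -
  have "g (x + t *\<^sub>R d) < \<infinity>" if "t \<in> {0<..<s}" for t
  proof -
    have "x + t *\<^sub>R d = x + (t / s) *\<^sub>R ((x + s *\<^sub>R d) - x)"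
      using \<open>s > 0\<close> by simp
    then show ?thesis
      using econvex_finite_segment[OF assms(1-4), of "t / s"] that by simp
  qed
  then show ?thesis
    unfolding feasible_dirs_def using assms(3,5) by (auto simp: edom_def)
qed

lemma econvex_dir_deriv_le:
  assumes "econvex g" "\<And>z. g z \<noteq> -\<infinity>" "g x < \<infinity>" "g y < \<infinity>"
    and "has_dir_deriv g x (y - x) L"
  shows "g x + ereal L \<le> g y"
proof -
  obtain a b where a: "g x = ereal a" and b: "g y = ereal b"
    using assms(2-4) by (metis ereal_infty_less(1) ereal_cases)
  have "\<forall>\<^sub>F s in at_right 0. (g (x + s *\<^sub>R (y - x)) - g x) / ereal s \<le> ereal (b - a)"
  proof (rule eventually_mono[OF eventually_at_right_0_less_1])
    fix s :: real
    assume s: "s \<in> {0<..<1}"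
    obtain c where c: "g (x + s *\<^sub>R (y - x)) = ereal c"
      using econvex_finite_segment[OF assms(1-4), of s] assms(2) s
      by (cases "g (x + s *\<^sub>R (y - x))") auto
    have "g ((1 - s) *\<^sub>R x + s *\<^sub>R y) \<le> ereal (1 - s) * g x + ereal s * g y"
      using assms(1) s unfolding econvex_def by auto
    also have "(1 - s) *\<^sub>R x + s *\<^sub>R y = x + s *\<^sub>R (y - x)"
      by (simp add: algebra_simps)
    finally have "c - a \<le> s * (b - a)"
      using a b c by (simp add: algebra_simps)
    then show "(g (x + s *\<^sub>R (y - x)) - g x) / ereal s \<le> ereal (b - a)"
      using a c s by (simp add: divide_le_eq mult.commute)
  qed
  then have "ereal L \<le> ereal (b - a)"
    using assms(5) unfolding has_dir_deriv_def
    by (intro tendsto_le[OF trivial_limit_at_right_real tendsto_const])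
  then show ?thesis
    using a b by simp
qed

lemma has_dir_deriv_lower_envelope:
  fixes f :: "'i \<Rightarrow> 'a::real_vector \<Rightarrow> ereal"
  assumes "finite A" "A \<noteq> {}"
    and deriv: "\<And>i. i \<in> A \<Longrightarrow> has_dir_deriv (f i) x d (L i)"
    and active: "\<And>i. i \<in> A \<Longrightarrow> f i x = G x" and "G x = ereal r"
    and envelope: "\<forall>\<^sub>F s in at_right 0. G (x + s *\<^sub>R d) = lower_envelope f A (x + s *\<^sub>R d)"
  shows "has_dir_deriv G x d (Min (L ` A))"
proof -
  define q where "q = (\<lambda>i s. (f i (x + s *\<^sub>R d) - f i x) / ereal s)"
  have "\<forall>\<^sub>F s in at_right 0. lower_envelope q A s = (G (x + s *\<^sub>R d) - G x) / ereal s"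
    using envelope eventually_at_right_0_less_1
  proof eventually_elim
    case (elim s)
    \<comment> \<open>subtracting G x and dividing by s > 0 is monotone, so it commutes with Min\<close>
    define h where "h a = (a - ereal r) / ereal s" for a
    have "mono h"
      using elim(2) by (auto simp: mono_def h_def intro!: ereal_divide_right_mono ereal_minus_mono)
    then have "h (lower_envelope f A (x + s *\<^sub>R d)) = Min (h ` (\<lambda>i. f i (x + s *\<^sub>R d)) ` A)"
      unfolding lower_envelope_def using assms(1,2) by (simp add: mono_Min_commute)
    also have "\<dots> = lower_envelope q A s"
      using active \<open>G x = ereal r\<close> by (simp add: lower_envelope_def image_image q_def h_def)
    finally have "h (lower_envelope f A (x + s *\<^sub>R d)) = lower_envelope q A s" .
    with elim(1) \<open>G x = ereal r\<close> show ?case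
      by (simp add: h_def)
  qed
  moreover have "(lower_envelope q A \<longlongrightarrow> Min ((\<lambda>i. ereal (L i)) ` A)) (at_right 0)"
    using assms(1,2) deriv by (intro tendsto_lower_envelope) (auto simp: has_dir_deriv_def q_def)
  moreover have "Min ((\<lambda>i. ereal (L i)) ` A) = ereal (Min (L ` A))"
    using assms(1,2) mono_Min_commute[of ereal "L ` A"] by (simp add: mono_def image_image)
  ultimately show ?thesis
    unfolding has_dir_deriv_def by (simp add: tendsto_cong)
qed

lemma continuous_on_edom_eventually:
  fixes g :: "'a::topological_space \<Rightarrow> ereal"
  assumes "continuous_on (edom g) g" "closed (edom g)" "m < g x"
  shows "\<forall>\<^sub>F y in nhds x. m < g y"
proof (cases "x \<in> edom g")
  case True
  then have "(g \<longlongrightarrow> g x) (at x within edom g)"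
    using assms(1) by (simp add: continuous_on_def)
  then have "\<forall>\<^sub>F y in at x within edom g. m < g y"
    using assms(3) by (rule order_tendstoD)
  then have "\<forall>\<^sub>F y in nhds x. y \<noteq> x \<longrightarrow> y \<in> edom g \<longrightarrow> m < g y"
    by (simp add: eventually_at_filter)
  then show ?thesis
  proof eventually_elim
    case (elim y)
    then show ?case
      using assms(3) by (cases "y = x") (auto simp: edom_def)
  qed
next
  case False
  then have "\<forall>\<^sub>F y in nhds x. y \<in> - edom g"
    using assms(2) by (intro eventually_nhds_in_open) auto
  then show ?thesis
    by eventually_elim (use assms(3) in \<open>auto simp: edom_def\<close>)
qed

lemma lower_envelope_active_near:
  fixes f :: "'i \<Rightarrow> 'a::metric_space \<Rightarrow> ereal" and I :: "'i set"
  defines "F \<equiv> lower_envelope f I"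
  assumes "finite I" "I \<noteq> {}"
    and cont: "\<And>i. i \<in> I \<Longrightarrow> continuous_on (edom (f i)) (f i)"
    and closed: "\<And>i. i \<in> I \<Longrightarrow> closed (edom (f i))"
    and contF: "continuous_on (edom F) F" and "x \<in> edom F"
  obtains e where "e > 0" "\<And>z. z \<in> ball x e \<inter> edom F \<Longrightarrow> \<exists>k\<in>I. f k x = F x \<and> f k z = F z"
proof -
  have "\<forall>\<^sub>F y in nhds x. \<forall>i\<in>{i\<in>I. f i x \<noteq> F x}. y \<in> edom F \<longrightarrow> F y < f i y"
  proof (intro eventually_ball_finite ballI)
    fix i
    assume i: "i \<in> {i\<in>I. f i x \<noteq> F x}"
    then have "F x < f i x"
      using lower_envelope_le[OF \<open>finite I\<close>] by (auto simp: F_def order.strict_iff_order)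
    then obtain m where m: "F x < m" "m < f i x"
      using dense by blast
    have "(F \<longlongrightarrow> F x) (at x within edom F)"
      using contF \<open>x \<in> edom F\<close> by (simp add: continuous_on_def)
    then have "\<forall>\<^sub>F y in at x within edom F. F y < m"
      using m(1) by (rule order_tendstoD)
    then have "\<forall>\<^sub>F y in nhds x. y \<noteq> x \<longrightarrow> y \<in> edom F \<longrightarrow> F y < m"
      by (simp add: eventually_at_filter)
    moreover have "\<forall>\<^sub>F y in nhds x. m < f i y"
      using cont closed i m(2) by (intro continuous_on_edom_eventually) auto
    ultimately show "\<forall>\<^sub>F y in nhds x. y \<in> edom F \<longrightarrow> F y < f i y"
    proof eventually_elim
      case (elim y)
      then show ?case
        using m by (cases "y = x") auto
    qed
  qed (use \<open>finite I\<close> in simp)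
  then obtain e where "e > 0" and e: "\<And>y i. dist y x < e \<Longrightarrow> i \<in> I \<Longrightarrow> f i x \<noteq> F x \<Longrightarrow>
      y \<in> edom F \<Longrightarrow> F y < f i y"
    unfolding eventually_nhds_metric by blast
  show thesis
  proof (rule that[OF \<open>e > 0\<close>])
    fix z
    assume z: "z \<in> ball x e \<inter> edom F"
    obtain k where k: "k \<in> I" "F z = f k z"
      using lower_envelope_attained[OF \<open>finite I\<close> \<open>I \<noteq> {}\<close>] unfolding F_def by metis
    with e[of z k] z have "f k x = F x"
      by (auto simp: dist_commute)
    with k show "\<exists>k\<in>I. f k x = F x \<and> f k z = F z"
      by auto
  qed
qed

lemma lower_envelope_dir_deriv_bound:
  fixes f :: "'i \<Rightarrow> 'a::real_normed_vector \<Rightarrow> ereal" and I :: "'i set"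
  defines "F \<equiv> lower_envelope f I"
  assumes "finite I"
    and conv: "\<And>i. i \<in> I \<Longrightarrow> econvex (f i)"
    and proper: "\<And>i z. i \<in> I \<Longrightarrow> f i z \<noteq> -\<infinity>"
    and ddiff: "\<And>i. i \<in> I \<Longrightarrow> dir_differentiable (f i)"
    and x: "x \<in> edom F"
    and active: "\<And>z. z \<in> ball x e \<inter> edom F \<Longrightarrow> \<exists>k\<in>I. f k x = F x \<and> f k z = F z"
    and y: "y \<in> ball x e \<inter> edom F"
  shows "y - x \<in> feasible_dirs x (edom F) \<and>
    (\<exists>L. has_dir_deriv F x (y - x) L \<and> F x + ereal L \<le> F y)"
proof -
  define d where "d = y - x"
  obtain j where j: "j \<in> I" "f j x = F x" "f j y = F y"
    using active y by blast
  have fj_finite: "f j x < \<infinity>" "f j y < \<infinity>"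
    using j x y by (auto simp: edom_def)
  obtain r where r: "F x = ereal r"
    using fj_finite(1) proper[OF j(1)] j(2) by (cases "F x") auto
  have segment: "x + s *\<^sub>R d \<in> ball x e \<inter> edom F" if "0 \<le> s" "s \<le> 1" for s
  proof
    have "dist x (x + s *\<^sub>R d) = s * norm d"
      using that by (simp add: dist_norm)
    also have "\<dots> \<le> norm d"
      using that by (simp add: mult_left_le_one_le)
    also have "\<dots> < e"
      using y by (simp add: d_def dist_norm norm_minus_commute)
    finally show "x + s *\<^sub>R d \<in> ball x e"
      by simp
    show "x + s *\<^sub>R d \<in> edom F"
      using econvex_finite_segment[OF conv[OF j(1)] proper[OF j(1)] fj_finite, of s] that
        lower_envelope_le[OF \<open>finite I\<close> j(1), of f "x + s *\<^sub>R d"]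
      by (auto simp: edom_def F_def d_def)
  qed
  have "d \<in> feasible_dirs x (edom F)"
    unfolding feasible_dirs_def using x segment by (auto intro!: exI[of _ 1])
  define A where "A = {i\<in>I. f i x = F x \<and> d \<in> feasible_dirs x (edom (f i))}"
  have "finite A"
    using \<open>finite I\<close> by (simp add: A_def)
  have "j \<in> A"
    using econvex_feasible_dir[OF conv[OF j(1)] proper[OF j(1)] fj_finite(1), of 1 d] fj_finite(2) j(1,2)
    by (simp add: A_def d_def)
  have "\<exists>L. has_dir_deriv (f i) x d L" if "i \<in> A" for i
    using ddiff that fj_finite(1) j(2) by (auto simp: A_def dir_differentiable_def edom_def)
  then obtain L where L: "\<And>i. i \<in> A \<Longrightarrow> has_dir_deriv (f i) x d (L i)"
    by metis
  have "\<forall>\<^sub>F s in at_right 0. F (x + s *\<^sub>R d) = lower_envelope f A (x + s *\<^sub>R d)"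
    using eventually_at_right_0_less_1
  proof eventually_elim
    case (elim s)
    then have z: "x + s *\<^sub>R d \<in> ball x e \<inter> edom F"
      by (intro segment) auto
    then obtain k where k: "k \<in> I" "f k x = F x" "f k (x + s *\<^sub>R d) = F (x + s *\<^sub>R d)"
      using active by blast
    have "k \<in> A"
      using econvex_feasible_dir[OF conv proper, of k x s d] k z elim r
      by (auto simp: A_def edom_def)
    then show ?case
      using k lower_envelope_le[OF \<open>finite I\<close>]
      by (intro lower_envelope_eqI[symmetric, OF \<open>finite A\<close>]) (auto simp: A_def F_def)
  qed
  then have "has_dir_deriv F x d (Min (L ` A))"
    using \<open>finite A\<close> \<open>j \<in> A\<close> L r by (intro has_dir_deriv_lower_envelope) (auto simp: A_def)
  moreover have "F x + ereal (Min (L ` A)) \<le> f j x + ereal (L j)"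
    using \<open>finite A\<close> \<open>j \<in> A\<close> j(2) r by simp
  moreover have "\<dots> \<le> F y"
    using econvex_dir_deriv_le[OF conv[OF j(1)] proper[OF j(1)] fj_finite] L[OF \<open>j \<in> A\<close>] j by (simp add: d_def)
  ultimately show ?thesis
    using \<open>d \<in> feasible_dirs x (edom F)\<close> by (auto simp: d_def intro: order_trans)
qed


theorem mainTheorem2:
  fixes f :: "nat \<Rightarrow> 'a::euclidean_space \<Rightarrow> ereal" and M :: nat
  assumes M: "M \<ge> 1"
    and proper: "\<And>i x. i \<in> {1..M} \<Longrightarrow> f i x \<noteq> -\<infinity>"
    and conv: "\<And>i. i \<in> {1..M} \<Longrightarrow> econvex (f i)"
    and ddiff: "\<And>i. i \<in> {1..M} \<Longrightarrow> dir_differentiable (f i)"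
    and cont: "\<And>i. i \<in> {1..M} \<Longrightarrow> continuous_on (edom (f i)) (f i)"
    and closed: "\<And>i. i \<in> {1..M} \<Longrightarrow> closed (edom (f i))"
    and contF: "continuous_on (edom (\<lambda>x. Min ((\<lambda>i. f i x) ` {1..M})))
                  (\<lambda>x. Min ((\<lambda>i. f i x) ` {1..M}))"
  shows "\<forall>x \<in> edom (\<lambda>x. Min ((\<lambda>i. f i x) ` {1..M})).
           \<exists>N. open N \<and> x \<in> N \<and>
             (\<forall>y \<in> N \<inter> edom (\<lambda>x. Min ((\<lambda>i. f i x) ` {1..M})).
                y - x \<in> feasible_dirs x (edom (\<lambda>x. Min ((\<lambda>i. f i x) ` {1..M}))) \<and>
                (\<exists>L. has_dir_deriv (\<lambda>x. Min ((\<lambda>i. f i x) ` {1..M})) x (y - x) L \<and>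
                     Min ((\<lambda>i. f i y) ` {1..M}) \<ge> Min ((\<lambda>i. f i x) ` {1..M}) + ereal L))"
proof -
  let ?F = "lower_envelope f {1..M}"
  have F: "(\<lambda>x. Min ((\<lambda>i. f i x) ` {1..M})) = ?F"
    by (simp add: lower_envelope_def fun_eq_iff)
  have I: "finite {1..M}" "{1..M} \<noteq> {}"
    using M by auto
  have "\<exists>N. open N \<and> x \<in> N \<and> (\<forall>y \<in> N \<inter> edom ?F. y - x \<in> feasible_dirs x (edom ?F) \<and>
      (\<exists>L. has_dir_deriv ?F x (y - x) L \<and> ?F x + ereal L \<le> ?F y))"
    if x: "x \<in> edom ?F" for x
  proof -
    obtain e where "e > 0"
      and active: "\<And>z. z \<in> ball x e \<inter> edom ?F \<Longrightarrow> \<exists>k\<in>{1..M}. f k x = ?F x \<and> f k z = ?F z"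
      using lower_envelope_active_near[OF I cont closed _ x] contF unfolding F by metis
    then show ?thesis
      using lower_envelope_dir_deriv_bound[where e = e, OF I(1) conv proper ddiff x active]
      by (intro exI[of _ "ball x e"]) auto
  qed
  then show ?thesis
    unfolding F by (simp add: lower_envelope_def)
qed

end
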